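(* Let $X$ be a continuous random variable with finite support $[a,b]$. For each $n$, let $X_1, \dots, X_n$ be i.i.d. samples from $X$ and let $X_{(1)} \le X_{(2)} \le \dots \le X_{(n)}$ denote their order statistics. Then $E[X_{(k+1)} - X_{(k)}] \to 0$ as $n \to \infty$ uniformly in $k$; that is, for every $\varepsilon > 0$ there exists $N$ such that for all $n > N$ and all $1 \le k \le n-1$, $E[X_{(k+1)} - X_{(k)}] < \varepsilon$. *)

theory Defs
  imports "HOL-Probability.Probability"
begin

definition measure_support :: "real measure \<Rightarrow> real set" where
  "measure_support \<mu> = {x. \<forall>U. open U \<and> x \<in> U \<longrightarrow> emeasure \<mu> U > 0}"

definition order_stat :: "nat \<Rightarrow> nat \<Rightarrow> (nat \<Rightarrow> real) \<Rightarrow> real" where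
  "order_stat n k \<omega> = sort (map \<omega> [0..<n]) ! (k - 1)"

end

theory Submission
  imports Defs
begin

text \<open>Cut \<open>[a, b]\<close> into \<open>m\<close> open cells of width \<open>\<delta> = (b - a) / m\<close>. Each cell is an open set
  meeting the support, so it has positive mass \<open>p\<^sub>j\<close>, and the probability that all \<open>n\<close>
  samples miss cell \<open>j\<close> is \<open>(1 - p\<^sub>j)\<^sup>n \<rightarrow> 0\<close>. If every cell is hit, two consecutive
  order statistics are at most \<open>2\<delta>\<close> apart, because a larger gap would contain a whole cell;
  in any case the gap is at most \<open>b - a\<close>. Hence the expected gap is at most
  \<open>2\<delta> + (b - a) \<Sum>\<^sub>j (1 - p\<^sub>j)\<^sup>n\<close>, uniformly in \<open>k\<close>.\<close>

lemma closed_measure_support: "closed (measure_support D)"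
  unfolding closed_def
proof (rule Topological_Spaces.openI)
  fix x assume "x \<in> - measure_support D"
  then obtain U where U: "open U" "x \<in> U" "emeasure D U = 0"
    unfolding measure_support_def by auto
  then have "U \<subseteq> - measure_support D"
    unfolding measure_support_def by force
  with U show "\<exists>T. open T \<and> x \<in> T \<and> T \<subseteq> - measure_support D" by blast
qed

lemma null_sets_open_disjoint_measure_support:
  fixes D :: "real measure"
  assumes sets_D: "sets D = sets borel" and "open U" and "U \<inter> measure_support D = {}"
  shows "U \<in> null_sets D"
proof -
  \<comment> \<open>By Lindelof, the union of all open null sets is the union of countably many of them.\<close>
  define \<F> where "\<F> = {V. open V \<and> emeasure D V = 0}"
  obtain \<F>' where \<F>': "\<F>' \<subseteq> \<F>" "countable \<F>'" "\<Union>\<F>' = \<Union>\<F>"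
    using Lindelof[of \<F>] by (auto simp: \<F>_def)
  have "\<forall>V\<in>\<F>'. V \<in> null_sets D"
    using \<F>'(1) by (auto simp: \<F>_def null_sets_def sets_D)
  then have "\<Union>\<F>' \<in> null_sets D"
    using null_sets_UN'[OF \<F>'(2), of "\<lambda>V. V"] by simp
  moreover have "U \<subseteq> \<Union>\<F>"
  proof
    fix x assume "x \<in> U"
    then have "x \<notin> measure_support D"
      using assms(3) by auto
    then show "x \<in> \<Union>\<F>"
      unfolding measure_support_def \<F>_def by auto
  qed
  moreover have "U \<in> sets D"
    using \<open>open U\<close> by (simp add: sets_D)
  ultimately show ?thesis
    using \<F>'(3) by (metis null_sets_subset)
qed

lemma AE_in_measure_support:
  fixes D :: "real measure"
  assumes "sets D = sets borel"
  shows "AE x in D. x \<in> measure_support D"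
  by (rule AE_I'[OF null_sets_open_disjoint_measure_support[OF assms open_Compl[OF closed_measure_support]]])
    auto

lemma measure_support_nonempty:
  fixes D :: "real measure"
  assumes "prob_space D" and "sets D = sets borel"
  shows "measure_support D \<noteq> {}"
  using AE_in_measure_support[OF assms(2)] prob_space.AE_False[OF assms(1)] by auto

definition grid_cell :: "real \<Rightarrow> real \<Rightarrow> nat \<Rightarrow> nat \<Rightarrow> real set" where
  "grid_cell a b m j = {a + real j * ((b - a) / m) <..< a + real (Suc j) * ((b - a) / m)}"

lemma grid_cell_subset_between:
  assumes "a \<le> x" "x \<le> y" "y \<le> b" "m > 0" and gap: "y - x > 2 * ((b - a) / m)"
  obtains j where "j < m" "grid_cell a b m j \<subseteq> {x<..<y}"
proof -
  define \<delta> where "\<delta> = (b - a) / m"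
  have "\<delta> > 0"
    using assms unfolding \<delta>_def by (cases "a = b") (auto simp: field_simps)
  define t where "t = (x - a) / \<delta>"
  have t: "t \<ge> 0" "x = a + t * \<delta>"
    using assms \<open>\<delta> > 0\<close> unfolding t_def by auto
  define j where "j = nat \<lfloor>t\<rfloor> + 1"
  have j: "t < real j" "real j \<le> t + 1"
    unfolding j_def using t(1) by linarith+
  have lower: "x < a + real j * \<delta>"
    using j(1) t(2) \<open>\<delta> > 0\<close> by (simp add: mult_strict_right_mono)
  have "real (Suc j) * \<delta> \<le> (t + 2) * \<delta>"
    using j(2) \<open>\<delta> > 0\<close> by (intro mult_right_mono) auto
  also have "(t + 2) * \<delta> = (x - a) + 2 * \<delta>"
    using t(2) by (simp add: algebra_simps)
  finally have upper: "a + real (Suc j) * \<delta> < y"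
    using gap unfolding \<delta>_def by linarith
  have "real (Suc j) * \<delta> < real m * \<delta>"
    using upper assms(3,4) unfolding \<delta>_def by simp
  then have "j < m"
    using \<open>\<delta> > 0\<close> by (simp add: mult_less_cancel_right)
  moreover have "grid_cell a b m j \<subseteq> {x<..<y}"
    using lower upper unfolding grid_cell_def \<delta>_def by auto
  ultimately show ?thesis by (rule that)
qed

lemma sorted_nth_Suc_no_between:
  assumes "sorted s" "Suc i < length s" "z \<in> set s"
  shows "z \<notin> {s ! i <..< s ! Suc i}"
proof -
  obtain l where l: "l < length s" "z = s ! l"
    using assms(3) by (metis in_set_conv_nth)
  show ?thesis
  proof (cases "l \<le> i")
    case True
    then have "z \<le> s ! i"
      using assms(1,2) l by (simp add: sorted_nth_mono)
    then show ?thesis by auto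
  next
    case False
    then have "s ! Suc i \<le> z"
      using assms(1) l by (simp add: sorted_nth_mono)
    then show ?thesis by auto
  qed
qed

lemma sorted_gap_le_grid_width:
  assumes "sorted s" "Suc i < length s" and range: "set s \<subseteq> {a..b}" and "m > 0"
    and hits: "\<forall>j<m. set s \<inter> grid_cell a b m j \<noteq> {}"
  shows "s ! Suc i - s ! i \<le> 2 * ((b - a) / m)"
proof (rule ccontr)
  assume gap: "\<not> ?thesis"
  have "s ! i \<in> set s" "s ! Suc i \<in> set s"
    using assms(2) by simp_all
  then have "s ! i \<in> {a..b}" "s ! Suc i \<in> {a..b}"
    using range by blast+
  moreover have "s ! i \<le> s ! Suc i"
    using assms(1,2) by (simp add: sorted_nth_mono)
  ultimately obtain j where "j < m" "grid_cell a b m j \<subseteq> {s ! i <..< s ! Suc i}"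
    using grid_cell_subset_between[of a "s ! i" "s ! Suc i" b m] \<open>m > 0\<close> gap by auto
  then show False
    using hits sorted_nth_Suc_no_between[OF assms(1,2)] by blast
qed

lemma order_stat_gap_eq_nth_sort:
  assumes "1 \<le> k"
  shows "order_stat n (k + 1) \<omega> - order_stat n k \<omega>
    = sort (map \<omega> [0..<n]) ! Suc (k - 1) - sort (map \<omega> [0..<n]) ! (k - 1)"
  using assms by (simp add: order_stat_def)

lemma order_stat_gap_le_width:
  assumes "\<forall>i<n. \<omega> i \<in> {a..b}" "1 \<le> k" "k < n"
  shows "order_stat n (k + 1) \<omega> - order_stat n k \<omega> \<le> b - a"
proof -
  let ?s = "sort (map \<omega> [0..<n])"
  have "Suc (k - 1) < length ?s" "k - 1 < length ?s"
    using assms(2,3) by simp_all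
  then have "?s ! Suc (k - 1) \<in> set ?s" "?s ! (k - 1) \<in> set ?s"
    using nth_mem by blast+
  then have "?s ! Suc (k - 1) \<le> b" "a \<le> ?s ! (k - 1)"
    using assms(1) by auto
  then show ?thesis
    unfolding order_stat_gap_eq_nth_sort[OF assms(2)] by simp
qed

lemma order_stat_gap_le_grid_width:
  assumes "\<forall>i<n. \<omega> i \<in> {a..b}" "1 \<le> k" "k < n" "m > 0"
    and "\<forall>j<m. \<exists>i<n. \<omega> i \<in> grid_cell a b m j"
  shows "order_stat n (k + 1) \<omega> - order_stat n k \<omega> \<le> 2 * ((b - a) / m)"
proof -
  let ?s = "sort (map \<omega> [0..<n])"
  have set_s: "set ?s = \<omega> ` {..<n}"
    by auto
  have "set ?s \<subseteq> {a..b}"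
    using assms(1) unfolding set_s by auto
  moreover have "\<forall>j<m. set ?s \<inter> grid_cell a b m j \<noteq> {}"
    using assms(5) unfolding set_s by blast
  moreover have "Suc (k - 1) < length ?s"
    using assms(2,3) by simp
  ultimately show ?thesis
    unfolding order_stat_gap_eq_nth_sort[OF assms(2)]
    using sorted_gap_le_grid_width[of ?s] \<open>m > 0\<close> by simp
qed

lemma order_stat_gap_le_grid_avoidance:
  assumes "\<omega> \<in> PiE {..<n} (\<lambda>_. {a..b})" "1 \<le> k" "k < n" "m > 0"
  shows "order_stat n (k + 1) \<omega> - order_stat n k \<omega>
    \<le> 2 * ((b - a) / m) + (b - a) * (\<Sum>j<m. indicator (PiE {..<n} (\<lambda>_. - grid_cell a b m j)) \<omega>)"
proof -
  let ?B = "\<lambda>j. PiE {..<n} (\<lambda>_. - grid_cell a b m j)"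
  define misses where "misses = (\<Sum>j<m. indicator (?B j) \<omega> :: real)"
  have range: "\<forall>i<n. \<omega> i \<in> {a..b}"
    using PiE_mem[OF assms(1)] by simp
  then have "a \<le> b"
    using assms(3) by auto
  then have "0 \<le> 2 * ((b - a) / m)" "0 \<le> misses"
    unfolding misses_def by (simp_all add: sum_nonneg)
  consider (missed) j where "j < m" "\<omega> \<in> ?B j" | (hit) "\<forall>j<m. \<omega> \<notin> ?B j"
    by blast
  then have "order_stat n (k + 1) \<omega> - order_stat n k \<omega> \<le> 2 * ((b - a) / m) + (b - a) * misses"
  proof cases
    case missed
    then have "indicator (?B j) \<omega> \<le> misses"
      unfolding misses_def by (intro member_le_sum) auto
    then have "1 \<le> misses"
      using missed(2) by simp
    have "order_stat n (k + 1) \<omega> - order_stat n k \<omega> \<le> b - a"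
      by (rule order_stat_gap_le_width[OF range assms(2,3)])
    also have "\<dots> \<le> (b - a) * misses"
      using mult_left_mono[OF \<open>1 \<le> misses\<close>, of "b - a"] \<open>a \<le> b\<close> by simp
    also have "\<dots> \<le> 2 * ((b - a) / m) + (b - a) * misses"
      using \<open>0 \<le> 2 * ((b - a) / m)\<close> by simp
    finally show ?thesis .
  next
    case hit
    have "\<exists>i<n. \<omega> i \<in> grid_cell a b m j" if "j < m" for j
    proof (rule ccontr)
      assume "\<not> (\<exists>i<n. \<omega> i \<in> grid_cell a b m j)"
      then have "\<omega> \<in> ?B j"
        using assms(1) by (simp add: PiE_iff)
      with hit that show False
        by blast
    qed
    then have "order_stat n (k + 1) \<omega> - order_stat n k \<omega> \<le> 2 * ((b - a) / m)"
      using order_stat_gap_le_grid_width[OF range assms(2-4)] by blast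
    moreover have "0 \<le> (b - a) * misses"
      using \<open>a \<le> b\<close> \<open>0 \<le> misses\<close> by simp
    ultimately show ?thesis
      by linarith
  qed
  then show ?thesis
    unfolding misses_def .
qed

lemma measure_PiM_PiE_Diff:
  assumes "prob_space D" "finite I" "A \<in> sets D"
  shows "measure (PiM I (\<lambda>_. D)) (PiE I (\<lambda>_. space D - A)) = (1 - measure D A) ^ card I"
proof -
  interpret D: prob_space D
    by (fact assms(1))
  interpret finite_product_prob_space "\<lambda>_. D" I
    by (simp add: finite_product_prob_space_def finite_product_sigma_finite_def product_prob_space_def
        product_prob_space_axioms_def product_sigma_finite_def finite_product_sigma_finite_axioms_def
        assms(1,2) prob_space_imp_sigma_finite)
  have "measure (PiM I (\<lambda>_. D)) (PiE I (\<lambda>_. space D - A)) = (\<Prod>i\<in>I. measure D (space D - A))"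
    using assms(3) by (intro prob_times) auto
  then show ?thesis
    using D.prob_compl[OF assms(3)] by simp
qed

lemma expectation_order_stat_gap_le:
  fixes D :: "real measure"
  assumes D: "prob_space D" and sets_D: "sets D = sets borel" and range: "AE x in D. x \<in> {a..b}"
    and "1 \<le> k" "k < n" "m > 0"
  shows "(\<integral>\<omega>. order_stat n (k + 1) \<omega> - order_stat n k \<omega> \<partial>PiM {..<n} (\<lambda>_. D))
    \<le> 2 * ((b - a) / m) + (b - a) * (\<Sum>j<m. (1 - measure D (grid_cell a b m j)) ^ n)"
proof -
  let ?P = "PiM {..<n} (\<lambda>_. D)"
  interpret P: prob_space ?P
    using D by (rule prob_space_PiM)
  have space_D: "space D = UNIV"
    using sets_D by (metis sets_eq_imp_space_eq space_borel)
  have "a \<le> b"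
    using range prob_space.AE_False[OF D] by (cases "a \<le> b") auto
  define B where "B j = PiE {..<n} (\<lambda>_. - grid_cell a b m j)" for j
  have B: "B j \<in> sets ?P" "measure ?P (B j) = (1 - measure D (grid_cell a b m j)) ^ n" for j
    using measure_PiM_PiE_Diff[OF D, of "{..<n}" "grid_cell a b m j"]
    by (auto simp: B_def sets_D space_D Compl_eq_Diff_UNIV grid_cell_def intro!: sets_PiM_I_finite)
  define g where "g \<omega> = 2 * ((b - a) / m) + (b - a) * (\<Sum>j<m. indicator (B j) \<omega>)" for \<omega>
  have "integrable ?P g"
    using B(1) unfolding g_def
    by (intro Bochner_Integration.integrable_add integrable_mult_right Bochner_Integration.integrable_sum
        integrable_real_indicator P.integrable_const) (auto simp: P.emeasure_eq_measure)
  moreover have "AE \<omega> in ?P. \<omega> \<in> PiE {..<n} (\<lambda>_. {a..b})"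
  proof -
    have "AE \<omega> in ?P. \<forall>i\<in>{..<n}. \<omega> i \<in> {a..b}"
      using D range by (intro eventually_ball_finite ballI AE_PiM_component) auto
    with AE_space show ?thesis
      by eventually_elim (auto simp: space_PiM PiE_iff)
  qed
  then have "AE \<omega> in ?P. order_stat n (k + 1) \<omega> - order_stat n k \<omega> \<le> g \<omega>"
    unfolding g_def B_def by eventually_elim (rule order_stat_gap_le_grid_avoidance[OF _ assms(4-6)])
  moreover have "AE \<omega> in ?P. 0 \<le> g \<omega>"
    using \<open>a \<le> b\<close> by (simp add: g_def sum_nonneg)
  \<comment> \<open>Only the bound \<open>g\<close> has to be integrable.\<close>
  ultimately have "(\<integral>\<omega>. order_stat n (k + 1) \<omega> - order_stat n k \<omega> \<partial>?P) \<le> integral\<^sup>L ?P g"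
    by (intro integral_mono_AE')
  also have "\<dots> = 2 * ((b - a) / m) + (b - a) * (\<Sum>j<m. (1 - measure D (grid_cell a b m j)) ^ n)"
    using B unfolding g_def by (simp add: P.emeasure_eq_measure P.prob_space)
  finally show ?thesis .
qed

lemma emeasure_grid_cell_pos:
  assumes "measure_support D = {a..b}" "a < b" "j < m"
  shows "emeasure D (grid_cell a b m j) > 0"
proof -
  define \<delta> where "\<delta> = (b - a) / m"
  define c where "c = a + (real j + 1 / 2) * \<delta>"
  have "\<delta> > 0" "real m * \<delta> = b - a"
    using assms(2,3) unfolding \<delta>_def by simp_all
  have "real j * \<delta> < (real j + 1 / 2) * \<delta>" "(real j + 1 / 2) * \<delta> < real (Suc j) * \<delta>"
    using \<open>\<delta> > 0\<close> by (simp_all add: mult_strict_right_mono)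
  then have "c \<in> grid_cell a b m j"
    unfolding c_def grid_cell_def \<delta>_def[symmetric] by simp
  moreover have "(real j + 1 / 2) * \<delta> \<le> real m * \<delta>"
    using assms(3) \<open>\<delta> > 0\<close> by (intro mult_right_mono) auto
  then have "c \<in> measure_support D"
    using assms(1) \<open>\<delta> > 0\<close> \<open>real m * \<delta> = b - a\<close> unfolding c_def by simp
  ultimately show ?thesis
    unfolding measure_support_def grid_cell_def by auto
qed

lemma grid_avoidance_tendsto_zero:
  fixes D :: "real measure"
  assumes D: "prob_space D" "sets D = sets borel" and support: "measure_support D = {a..b}"
  shows "(\<lambda>n. (b - a) * (\<Sum>j<m. (1 - measure D (grid_cell a b m j)) ^ n)) \<longlonglongrightarrow> 0"
proof (cases "a < b")
  case True
  interpret D: prob_space D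
    by (fact D(1))
  have "(\<lambda>n. (1 - measure D (grid_cell a b m j)) ^ n) \<longlonglongrightarrow> 0" if "j < m" for j
  proof (rule LIMSEQ_power_zero)
    have "measure D (grid_cell a b m j) > 0"
      using emeasure_grid_cell_pos[OF support True that] by (simp add: D.emeasure_eq_measure)
    then show "norm (1 - measure D (grid_cell a b m j)) < 1"
      using D.prob_le_1 by simp
  qed
  then have "(\<lambda>n. \<Sum>j<m. (1 - measure D (grid_cell a b m j)) ^ n) \<longlonglongrightarrow> 0"
    by (intro tendsto_null_sum) simp
  then show ?thesis
    by (rule tendsto_mult_right_zero)
next
  case False
  then have "a = b"
    using measure_support_nonempty[OF D] support by simp
  then show ?thesis
    by simp
qed

lemma expectation_order_stat_gap_tendsto_zero_uniformly:
  fixes D :: "real measure"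
  assumes D: "prob_space D" "sets D = sets borel" and support: "measure_support D = {a..b}"
  shows "\<forall>\<epsilon>>0. \<exists>N. \<forall>n>N. \<forall>k. 1 \<le> k \<and> k < n \<longrightarrow>
    (\<integral>\<omega>. order_stat n (k + 1) \<omega> - order_stat n k \<omega> \<partial>PiM {..<n} (\<lambda>_. D)) < \<epsilon>"
proof (intro allI impI)
  fix \<epsilon> :: real
  assume "\<epsilon> > 0"
  have range: "AE x in D. x \<in> {a..b}"
    using AE_in_measure_support[OF D(2)] unfolding support .
  obtain m :: nat where "max 1 (4 * (b - a) / \<epsilon>) < m"
    using reals_Archimedean2 by blast
  then have "m > 0" "4 * (b - a) < m * \<epsilon>"
    using \<open>\<epsilon> > 0\<close> by (simp_all add: pos_divide_less_eq)
  then have width: "2 * ((b - a) / m) < \<epsilon> / 2"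
    by (simp add: field_simps)
  have "\<forall>\<^sub>F n in sequentially. (b - a) * (\<Sum>j<m. (1 - measure D (grid_cell a b m j)) ^ n) < \<epsilon> / 2"
    using order_tendstoD(2)[OF grid_avoidance_tendsto_zero[OF D support], of "\<epsilon> / 2"] \<open>\<epsilon> > 0\<close>
    by simp
  then obtain N where
    N: "\<And>n. N \<le> n \<Longrightarrow> (b - a) * (\<Sum>j<m. (1 - measure D (grid_cell a b m j)) ^ n) < \<epsilon> / 2"
    unfolding eventually_sequentially by blast
  show "\<exists>N. \<forall>n>N. \<forall>k. 1 \<le> k \<and> k < n \<longrightarrow>
    (\<integral>\<omega>. order_stat n (k + 1) \<omega> - order_stat n k \<omega> \<partial>PiM {..<n} (\<lambda>_. D)) < \<epsilon>"
  proof (intro exI allI impI)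
    fix n k :: nat
    assume "N < n" "1 \<le> k \<and> k < n"
    with expectation_order_stat_gap_le[OF D range _ _ \<open>m > 0\<close>, of k n] N[of n] width
    show "(\<integral>\<omega>. order_stat n (k + 1) \<omega> - order_stat n k \<omega> \<partial>PiM {..<n} (\<lambda>_. D)) < \<epsilon>"
      by linarith
  qed
qed

theorem theorem2:
  fixes M :: "'a measure" and X :: "'a \<Rightarrow> real" and a b :: real
  assumes "prob_space M"
    and "X \<in> borel_measurable M"
    and "absolutely_continuous lborel (distr M borel X)"
    and "measure_support (distr M borel X) = {a..b}"
  shows "\<forall>\<epsilon>>0. \<exists>N. \<forall>n>N. \<forall>k. 1 \<le> k \<and> k \<le> n - 1 \<longrightarrow>
           (\<integral>\<omega>. order_stat n (k + 1) \<omega> - order_stat n k \<omega>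
              \<partial>(PiM {..<n} (\<lambda>_. distr M borel X))) < \<epsilon>"
proof -
  have D: "prob_space (distr M borel X)" "sets (distr M borel X) = sets borel"
    by (rule prob_space.prob_space_distr[OF assms(1,2)]) simp
  have "1 \<le> k \<and> k \<le> n - 1 \<longleftrightarrow> 1 \<le> k \<and> k < n" for k n :: nat
    by auto
  then show ?thesis
    using expectation_order_stat_gap_tendsto_zero_uniformly[OF D assms(4)] by simp
qed

end
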